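(* Let $D$ be a friendship digraph. Then $D^{\leftarrow}$ is a friendship digraph. Equivalently, in a friendship digraph any two distinct vertices have exactly one common in-neighbor.
   Context: All digraphs are finite and have neither loops nor parallel arcs (a pair of opposite arcs $(u,v)$ and $(v,u)$ is allowed). A friendship digraph is a nontrivial digraph (at least two vertices) in which any two distinct vertices have exactly one common out-neighbor. For a digraph $D$, $D^{\leftarrow}$ is the digraph with $V(D^{\leftarrow})=V(D)$ and $(u,v)\in A(D^{\leftarrow})$ if and only if $(v,u)\in A(D)$. *)

theory Defs
  imports Main
begin

text \<open>A digraph is a finite vertex set V together with an arc set A \<subseteq> V \<times> V
  without loops (parallel arcs are excluded automatically since A is a set;
  opposite arcs (u,v),(v,u) are allowed).\<close>

definition digraph :: "'a set \<Rightarrow> ('a \<times> 'a) set \<Rightarrow> bool" where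
  "digraph V A \<longleftrightarrow> finite V \<and> A \<subseteq> V \<times> V \<and> (\<forall>v. (v, v) \<notin> A)"

definition out_neighbors :: "'a set \<Rightarrow> ('a \<times> 'a) set \<Rightarrow> 'a \<Rightarrow> 'a set" where
  "out_neighbors V A u = {w \<in> V. (u, w) \<in> A}"

definition friendship_digraph :: "'a set \<Rightarrow> ('a \<times> 'a) set \<Rightarrow> bool" where
  "friendship_digraph V A \<longleftrightarrow> digraph V A \<and> card V \<ge> 2 \<and>
     (\<forall>u\<in>V. \<forall>v\<in>V. u \<noteq> v \<longrightarrow>
        card (out_neighbors V A u \<inter> out_neighbors V A v) = 1)"

definition reverse_arcs :: "('a \<times> 'a) set \<Rightarrow> ('a \<times> 'a) set" where
  "reverse_arcs A = {(v, u). (u, v) \<in> A}"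

end

theory Submission
  imports Defs Complex_Main
begin

(* Call (x, w) with x, w in V and (x, w) not in A a non-arc; x = w is allowed.
  For a non-arc, sending an in-neighbour z of w to the common out-neighbour of x and z
  is injective: two in-neighbours of w already have w as their common out-neighbour,
  and w is not an out-neighbour of x. Hence indeg w <= outdeg x.
  Summing d / (n - d) over all non-arcs, once with d = outdeg x and once with d = indeg w,
  gives |A| both times, since x lies in n - outdeg x non-arcs and w in n - indeg w.
  As t / (n - t) is strictly increasing, indeg w = outdeg x on every non-arc, so the
  injection is onto out-neighbours of x.
  Now let u and v be distinct and y an in-neighbour of u (indeg u = outdeg u > 0).
  Either y is an in-neighbour of v, or u is the common out-neighbour of y and some
  in-neighbour z of v, and then z is a common in-neighbour of u and v. It is unique,
  since two common in-neighbours of u and v would have two common out-neighbours. *)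

definition in_neighbors :: "'a set \<Rightarrow> ('a \<times> 'a) set \<Rightarrow> 'a \<Rightarrow> 'a set" where
  "in_neighbors V A w = {x \<in> V. (x, w) \<in> A}"

lemma out_neighbors_reverse_arcs: "out_neighbors V (reverse_arcs A) = in_neighbors V A"
  unfolding out_neighbors_def in_neighbors_def reverse_arcs_def by auto

lemma digraph_reverse_arcs: "digraph V A \<Longrightarrow> digraph V (reverse_arcs A)"
  unfolding digraph_def reverse_arcs_def by auto

lemma card_reverse_arcs: "card (reverse_arcs A) = card A"
proof -
  have "reverse_arcs A = prod.swap ` A"
    unfolding reverse_arcs_def by force
  then show ?thesis
    by (simp add: card_image)
qed

lemma card_out_neighbors_less:
  assumes "digraph V A" "x \<in> V"
  shows "card (out_neighbors V A x) < card V"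
  using assms unfolding digraph_def out_neighbors_def by (intro psubset_card_mono) auto

lemma card_in_neighbors_less:
  assumes "digraph V A" "w \<in> V"
  shows "card (in_neighbors V A w) < card V"
  using card_out_neighbors_less[OF digraph_reverse_arcs[OF assms(1)] assms(2)]
  by (simp add: out_neighbors_reverse_arcs)

lemma card_arcs_eq_sum_out_degrees:
  assumes "digraph V A"
  shows "card A = (\<Sum>x\<in>V. card (out_neighbors V A x))"
proof -
  have "A = Sigma V (out_neighbors V A)"
    using assms unfolding digraph_def out_neighbors_def by auto
  moreover have "finite V"
    using assms unfolding digraph_def by simp
  moreover have "finite (out_neighbors V A x)" if "finite V" for x
    using that unfolding out_neighbors_def by simp
  ultimately show ?thesis
    using card_SigmaI by metis
qed

definition deg_ratio :: "nat \<Rightarrow> nat \<Rightarrow> real" where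
  "deg_ratio n d = real d / (real n - real d)"

lemma deg_ratio_le_iff:
  assumes "d < n" "e < n"
  shows "deg_ratio n d \<le> deg_ratio n e \<longleftrightarrow> d \<le> e"
proof -
  have "deg_ratio n d \<le> deg_ratio n e \<longleftrightarrow> real d * (real n - real e) \<le> real e * (real n - real d)"
    using assms unfolding deg_ratio_def by (simp add: divide_simps)
  also have "\<dots> \<longleftrightarrow> real d * real n \<le> real e * real n"
    by (simp add: algebra_simps)
  also have "\<dots> \<longleftrightarrow> d \<le> e"
    using assms by simp
  finally show ?thesis .
qed

lemma deg_ratio_eq_iff:
  assumes "d < n" "e < n"
  shows "deg_ratio n d = deg_ratio n e \<longleftrightarrow> d = e"
  using deg_ratio_le_iff[OF assms] deg_ratio_le_iff[OF assms(2,1)] by auto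

lemma deg_ratio_complement: "d < n \<Longrightarrow> real (n - d) * deg_ratio n d = real d"
  unfolding deg_ratio_def by (simp add: of_nat_diff)

lemma sum_non_arcs_deg_ratio_out:
  assumes "digraph V A"
  shows "(\<Sum>(x, w)\<in>V \<times> V - A. deg_ratio (card V) (card (out_neighbors V A x))) = card A"
proof -
  have fin: "finite V"
    using assms unfolding digraph_def by simp
  have "V \<times> V - A = Sigma V (\<lambda>x. V - out_neighbors V A x)"
    unfolding out_neighbors_def by auto
  then have "(\<Sum>(x, w)\<in>V \<times> V - A. deg_ratio (card V) (card (out_neighbors V A x)))
      = (\<Sum>x\<in>V. real (card (V - out_neighbors V A x)) * deg_ratio (card V) (card (out_neighbors V A x)))"
    using fin by (simp add: sum.Sigma[symmetric] finite_Diff)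
  also have "\<dots> = (\<Sum>x\<in>V. real (card (out_neighbors V A x)))"
    using fin card_out_neighbors_less[OF assms]
    by (intro sum.cong refl)
      (simp add: card_Diff_subset deg_ratio_complement out_neighbors_def finite_subset)
  also have "\<dots> = card A"
    by (simp add: card_arcs_eq_sum_out_degrees[OF assms])
  finally show ?thesis .
qed

lemma sum_non_arcs_deg_ratio_in:
  assumes "digraph V A"
  shows "(\<Sum>(x, w)\<in>V \<times> V - A. deg_ratio (card V) (card (in_neighbors V A w))) = card A"
proof -
  have "(\<Sum>(x, w)\<in>V \<times> V - A. deg_ratio (card V) (card (in_neighbors V A w)))
      = (\<Sum>(w, x)\<in>V \<times> V - reverse_arcs A. deg_ratio (card V) (card (in_neighbors V A w)))"
    by (rule sum.reindex_bij_witness[where i = prod.swap and j = prod.swap])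
      (auto simp: reverse_arcs_def)
  also have "\<dots> = card A"
    using sum_non_arcs_deg_ratio_out[OF digraph_reverse_arcs[OF assms]]
    by (simp add: out_neighbors_reverse_arcs card_reverse_arcs)
  finally show ?thesis .
qed

lemma card_in_neighbors_eq_card_out_neighbors_if_le:
  assumes D: "digraph V A"
    and le: "\<And>x w. (x, w) \<in> V \<times> V - A \<Longrightarrow>
      card (in_neighbors V A w) \<le> card (out_neighbors V A x)"
    and xw: "(x, w) \<in> V \<times> V - A"
  shows "card (in_neighbors V A w) = card (out_neighbors V A x)"
proof -
  define gap where "gap = (\<lambda>(x, w). deg_ratio (card V) (card (out_neighbors V A x))
    - deg_ratio (card V) (card (in_neighbors V A w)))"
  have fin: "finite (V \<times> V - A)"
    using D unfolding digraph_def by simp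
  have gap_nonneg: "gap p \<ge> 0" if "p \<in> V \<times> V - A" for p
    using that le card_in_neighbors_less[OF D] card_out_neighbors_less[OF D]
    unfolding gap_def by (auto simp: deg_ratio_le_iff)
  have "sum gap (V \<times> V - A) = 0"
    unfolding gap_def using sum_non_arcs_deg_ratio_out[OF D] sum_non_arcs_deg_ratio_in[OF D]
    by (simp add: case_prod_unfold sum_subtractf)
  then have "gap (x, w) = 0"
    using sum_nonneg_eq_0_iff[OF fin] gap_nonneg xw by blast
  then show ?thesis
    using xw card_in_neighbors_less[OF D] card_out_neighbors_less[OF D]
    unfolding gap_def by (simp add: deg_ratio_eq_iff)
qed

lemma friendship_digraph_digraph: "friendship_digraph V A \<Longrightarrow> digraph V A"
  unfolding friendship_digraph_def by simp

lemma friendship_digraph_common_out_neighbor_unique: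
  assumes "friendship_digraph V A" "x \<in> V" "y \<in> V" "x \<noteq> y"
    and "w \<in> out_neighbors V A x \<inter> out_neighbors V A y"
    and "w' \<in> out_neighbors V A x \<inter> out_neighbors V A y"
  shows "w = w'"
proof -
  have "card (out_neighbors V A x \<inter> out_neighbors V A y) = 1"
    using assms(1-4) unfolding friendship_digraph_def by blast
  then show ?thesis
    using assms(5,6) by (metis card_1_singletonE singletonD)
qed

lemma friendship_digraph_common_in_neighbor_unique:
  assumes F: "friendship_digraph V A" and "u \<noteq> v"
    and "z \<in> in_neighbors V A u \<inter> in_neighbors V A v"
    and "z' \<in> in_neighbors V A u \<inter> in_neighbors V A v"
  shows "z = z'"
proof (rule ccontr)
  assume "z \<noteq> z'"
  moreover have "u \<in> V" "v \<in> V"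
    using assms(3) friendship_digraph_digraph[OF F]
    unfolding digraph_def in_neighbors_def by auto
  ultimately have "u = v"
    using assms(3,4) unfolding in_neighbors_def
    by (intro friendship_digraph_common_out_neighbor_unique[OF F, of z z'])
      (auto simp: out_neighbors_def)
  with \<open>u \<noteq> v\<close> show False ..
qed

definition common_out_neighbor :: "'a set \<Rightarrow> ('a \<times> 'a) set \<Rightarrow> 'a \<Rightarrow> 'a \<Rightarrow> 'a" where
  "common_out_neighbor V A x z = the_elem (out_neighbors V A x \<inter> out_neighbors V A z)"

lemma common_out_neighbor_mem:
  assumes "friendship_digraph V A" "x \<in> V" "z \<in> V" "x \<noteq> z"
  shows "common_out_neighbor V A x z \<in> out_neighbors V A x \<inter> out_neighbors V A z"
proof -
  have "card (out_neighbors V A x \<inter> out_neighbors V A z) = 1"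
    using assms unfolding friendship_digraph_def by blast
  then show ?thesis
    unfolding common_out_neighbor_def by (metis card_1_singletonE insertI1 the_elem_eq)
qed

lemma common_out_neighbor_mem_in_neighbors:
  assumes "friendship_digraph V A" "x \<in> V" "(x, w) \<notin> A" "z \<in> in_neighbors V A w"
  shows "common_out_neighbor V A x z \<in> out_neighbors V A x \<inter> out_neighbors V A z"
  using assms by (intro common_out_neighbor_mem) (auto simp: in_neighbors_def)

lemma inj_on_common_out_neighbor:
  assumes F: "friendship_digraph V A" and x: "x \<in> V" "(x, w) \<notin> A"
  shows "inj_on (common_out_neighbor V A x) (in_neighbors V A w)"
proof
  fix z z'
  assume z: "z \<in> in_neighbors V A w" and z': "z' \<in> in_neighbors V A w"
    and eq: "common_out_neighbor V A x z = common_out_neighbor V A x z'"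
  let ?c = "common_out_neighbor V A x z"
  have c: "?c \<in> out_neighbors V A x \<inter> out_neighbors V A z \<inter> out_neighbors V A z'"
    using common_out_neighbor_mem_in_neighbors[OF F x] z z' eq by (metis Int_iff)
  show "z = z'"
  proof (rule ccontr)
    assume "z \<noteq> z'"
    then have "?c = w"
      using z z' c friendship_digraph_digraph[OF F] unfolding in_neighbors_def
      by (intro friendship_digraph_common_out_neighbor_unique[OF F, of z z'])
        (auto simp: out_neighbors_def digraph_def)
    with c x show False
      unfolding out_neighbors_def by auto
  qed
qed

lemma card_in_neighbors_le_card_out_neighbors:
  assumes F: "friendship_digraph V A" and x: "x \<in> V" "(x, w) \<notin> A"
  shows "card (in_neighbors V A w) \<le> card (out_neighbors V A x)"
proof -
  have "card (in_neighbors V A w) = card (common_out_neighbor V A x ` in_neighbors V A w)"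
    using inj_on_common_out_neighbor[OF F x] by (simp add: card_image)
  also have "\<dots> \<le> card (out_neighbors V A x)"
    using common_out_neighbor_mem_in_neighbors[OF F x] friendship_digraph_digraph[OF F]
    by (intro card_mono) (auto simp: digraph_def out_neighbors_def)
  finally show ?thesis .
qed

lemma friendship_digraph_card_in_neighbors_eq:
  assumes F: "friendship_digraph V A" and "x \<in> V" "w \<in> V" "(x, w) \<notin> A"
  shows "card (in_neighbors V A w) = card (out_neighbors V A x)"
  using assms friendship_digraph_digraph[OF F] card_in_neighbors_le_card_out_neighbors[OF F]
  by (intro card_in_neighbors_eq_card_out_neighbors_if_le) auto

lemma image_common_out_neighbor_in_neighbors:
  assumes F: "friendship_digraph V A" and x: "x \<in> V" "w \<in> V" "(x, w) \<notin> A"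
  shows "common_out_neighbor V A x ` in_neighbors V A w = out_neighbors V A x"
proof (rule card_subset_eq)
  show "finite (out_neighbors V A x)"
    using friendship_digraph_digraph[OF F] by (simp add: digraph_def out_neighbors_def)
  show "common_out_neighbor V A x ` in_neighbors V A w \<subseteq> out_neighbors V A x"
    using common_out_neighbor_mem_in_neighbors[OF F x(1,3)] by auto
  show "card (common_out_neighbor V A x ` in_neighbors V A w) = card (out_neighbors V A x)"
    using inj_on_common_out_neighbor[OF F x(1,3)] friendship_digraph_card_in_neighbors_eq[OF F x]
    by (simp add: card_image)
qed

lemma friendship_digraph_in_neighbors_nonempty:
  assumes F: "friendship_digraph V A" and u: "u \<in> V"
  shows "in_neighbors V A u \<noteq> {}"
proof -
  have "card V \<ge> 2"
    using F unfolding friendship_digraph_def by simp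
  then have "\<not> V \<subseteq> {u}"
    using card_mono[of "{u}" V] by auto
  then obtain v where v: "v \<in> V" "u \<noteq> v"
    by blast
  then have "card (out_neighbors V A u \<inter> out_neighbors V A v) = 1"
    using F u unfolding friendship_digraph_def by blast
  then have "out_neighbors V A u \<noteq> {}"
    by auto
  then have "card (out_neighbors V A u) \<noteq> 0"
    using friendship_digraph_digraph[OF F] by (simp add: digraph_def out_neighbors_def)
  moreover have "(u, u) \<notin> A"
    using friendship_digraph_digraph[OF F] by (simp add: digraph_def)
  ultimately show ?thesis
    using friendship_digraph_card_in_neighbors_eq[OF F u u] by auto
qed

lemma friendship_digraph_common_in_neighbor_exists:
  assumes F: "friendship_digraph V A" and uv: "u \<in> V" "v \<in> V"
  shows "\<exists>z. z \<in> in_neighbors V A u \<inter> in_neighbors V A v"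
proof -
  obtain y where y: "y \<in> in_neighbors V A u"
    using friendship_digraph_in_neighbors_nonempty[OF F uv(1)] by blast
  show ?thesis
  proof (cases "(y, v) \<in> A")
    case True
    with y uv show ?thesis
      unfolding in_neighbors_def by blast
  next
    case False
    have "y \<in> V" "u \<in> out_neighbors V A y"
      using y uv unfolding in_neighbors_def out_neighbors_def by auto
    then obtain z where z: "z \<in> in_neighbors V A v" "u = common_out_neighbor V A y z"
      using image_common_out_neighbor_in_neighbors[OF F _ uv(2) False] by blast
    then have "u \<in> out_neighbors V A z"
      using common_out_neighbor_mem_in_neighbors[OF F \<open>y \<in> V\<close> False] by auto
    with z show ?thesis
      unfolding in_neighbors_def out_neighbors_def by auto
  qed
qed

lemma friendship_digraph_card_common_in_neighbors:
  assumes F: "friendship_digraph V A" and "u \<in> V" "v \<in> V" "u \<noteq> v"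
  shows "card (in_neighbors V A u \<inter> in_neighbors V A v) = 1"
proof -
  obtain z where "z \<in> in_neighbors V A u \<inter> in_neighbors V A v"
    using friendship_digraph_common_in_neighbor_exists[OF F assms(2,3)] by blast
  with friendship_digraph_common_in_neighbor_unique[OF F assms(4)]
  have "in_neighbors V A u \<inter> in_neighbors V A v = {z}"
    by blast
  then show ?thesis
    by simp
qed

theorem theorem2p4:
  assumes "friendship_digraph V A"
  shows "friendship_digraph V (reverse_arcs A)"
  using assms digraph_reverse_arcs friendship_digraph_card_common_in_neighbors[OF assms]
  unfolding friendship_digraph_def out_neighbors_reverse_arcs by blast

end
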